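(* Let $(C,\ll)$ be an abstract basis that is also interpolative from the $+$ direction, i.e. for every $x\in C$ and finite $F\subseteq C$ with $x\ll f$ for all $f\in F$, there is $y\in C$ with $x\ll y$ and $y\ll f$ for all $f\in F$. Let $\mathrm{int}(C)=\{(a,b)\in C^2: a\ll b\}$ with the relation $(a,b)\ll(c,d)$ iff $a\ll c$ and $d\ll b$. Then $(\mathrm{int}(C),\ll)$ is an abstract basis.
   Context: An abstract basis is a set $B$ with a transitive relation $<$ that is interpolative: for every $x\in B$ and every finite $M\subseteq B$ with $m<x$ for all $m\in M$, there exists $y\in B$ with $m<y$ for all $m\in M$ and $y<x$. *)

theory Defs
  imports Main
begin

definition abstract_basis :: "'a set \<Rightarrow> ('a \<Rightarrow> 'a \<Rightarrow> bool) \<Rightarrow> bool" where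
  "abstract_basis B r \<longleftrightarrow>
     (\<forall>x\<in>B. \<forall>y\<in>B. \<forall>z\<in>B. r x y \<longrightarrow> r y z \<longrightarrow> r x z) \<and>
     (\<forall>x\<in>B. \<forall>M. finite M \<longrightarrow> M \<subseteq> B \<longrightarrow> (\<forall>m\<in>M. r m x) \<longrightarrow>
        (\<exists>y\<in>B. (\<forall>m\<in>M. r m y) \<and> r y x))"

definition interpolative_plus :: "'a set \<Rightarrow> ('a \<Rightarrow> 'a \<Rightarrow> bool) \<Rightarrow> bool" where
  "interpolative_plus B r \<longleftrightarrow>
     (\<forall>x\<in>B. \<forall>F. finite F \<longrightarrow> F \<subseteq> B \<longrightarrow> (\<forall>f\<in>F. r x f) \<longrightarrow>
        (\<exists>y\<in>B. r x y \<and> (\<forall>f\<in>F. r y f)))"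

definition int_set :: "'a set \<Rightarrow> ('a \<Rightarrow> 'a \<Rightarrow> bool) \<Rightarrow> ('a \<times> 'a) set" where
  "int_set C r = {(a, b). a \<in> C \<and> b \<in> C \<and> r a b}"

definition int_rel :: "('a \<Rightarrow> 'a \<Rightarrow> bool) \<Rightarrow> ('a \<times> 'a) \<Rightarrow> ('a \<times> 'a) \<Rightarrow> bool" where
  "int_rel r p q \<longleftrightarrow> r (fst p) (fst q) \<and> r (snd q) (snd p)"

end

theory Submission
  imports Defs
begin

text \<open>Below an interval \<open>(c, d)\<close> lies a whole finite family of intervals exactly when their
left endpoints lie below \<open>c\<close> and their right endpoints above \<open>d\<close>. Interpolating the left
endpoints from below \<open>c\<close> and the right endpoints from above \<open>d\<close> gives \<open>y\<^sub>1 \<lless> c\<close> and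
\<open>d \<lless> y\<^sub>2\<close>; since \<open>c \<lless> d\<close>, transitivity makes \<open>(y\<^sub>1, y\<^sub>2)\<close> an interval, and it is the
required interpolant.\<close>

lemma abstract_basis_transp_on: "abstract_basis B r \<Longrightarrow> transp_on B r"
  unfolding abstract_basis_def transp_on_def by blast

lemma abstract_basis_interpolate:
  assumes "abstract_basis B r" "x \<in> B" "finite M" "M \<subseteq> B" "\<forall>m\<in>M. r m x"
  obtains y where "y \<in> B" "\<forall>m\<in>M. r m y" "r y x"
  using assms unfolding abstract_basis_def by blast

lemma interpolative_plus_interpolate:
  assumes "interpolative_plus B r" "x \<in> B" "finite F" "F \<subseteq> B" "\<forall>f\<in>F. r x f"
  obtains y where "y \<in> B" "r x y" "\<forall>f\<in>F. r y f"
  using assms unfolding interpolative_plus_def by blast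

lemma transp_on_int_rel:
  assumes "transp_on C r"
  shows "transp_on (int_set C r) (int_rel r)"
proof (rule transp_onI, clarify)
  fix a b c d e f
  assume "(a, b) \<in> int_set C r" "(c, d) \<in> int_set C r" "(e, f) \<in> int_set C r"
    and "int_rel r (a, b) (c, d)" "int_rel r (c, d) (e, f)"
  then have "a \<in> C" "b \<in> C" "c \<in> C" "d \<in> C" "e \<in> C" "f \<in> C"
    and "r a c" "r c e" "r f d" "r d b"
    unfolding int_set_def int_rel_def by auto
  with assms have "r a e" "r f b"
    by (blast intro: transp_onD)+
  then show "int_rel r (a, b) (e, f)"
    unfolding int_rel_def by simp
qed

lemma int_rel_interpolate:
  assumes basis: "abstract_basis C r" and plus: "interpolative_plus C r"
    and x: "x \<in> int_set C r" and "finite M" and M: "M \<subseteq> int_set C r"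
    and below: "\<forall>m\<in>M. int_rel r m x"
  shows "\<exists>y\<in>int_set C r. (\<forall>m\<in>M. int_rel r m y) \<and> int_rel r y x"
proof -
  obtain c d where cd: "x = (c, d)" "c \<in> C" "d \<in> C" "r c d"
    using x unfolding int_set_def by auto
  have endpoints: "fst ` M \<subseteq> C" "snd ` M \<subseteq> C"
    using M unfolding int_set_def by auto
  obtain y\<^sub>1 where y\<^sub>1: "y\<^sub>1 \<in> C" "\<forall>a\<in>fst ` M. r a y\<^sub>1" "r y\<^sub>1 c"
    using abstract_basis_interpolate[OF basis \<open>c \<in> C\<close> _ endpoints(1)] \<open>finite M\<close> below cd
    unfolding int_rel_def by auto
  obtain y\<^sub>2 where y\<^sub>2: "y\<^sub>2 \<in> C" "r d y\<^sub>2" "\<forall>b\<in>snd ` M. r y\<^sub>2 b"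
    using interpolative_plus_interpolate[OF plus \<open>d \<in> C\<close> _ endpoints(2)] \<open>finite M\<close> below cd
    unfolding int_rel_def by auto
  have transp: "transp_on C r"
    using abstract_basis_transp_on[OF basis] .
  have "r c y\<^sub>2"
    using transp_onD[OF transp _ _ _ \<open>r c d\<close> \<open>r d y\<^sub>2\<close>] cd y\<^sub>2 by blast
  then have "r y\<^sub>1 y\<^sub>2"
    using transp_onD[OF transp _ _ _ \<open>r y\<^sub>1 c\<close>] cd y\<^sub>1 y\<^sub>2 by blast
  then show ?thesis
    using y\<^sub>1 y\<^sub>2 cd unfolding int_set_def int_rel_def
    by (intro bexI[of _ "(y\<^sub>1, y\<^sub>2)"]) auto
qed

theorem mainTheorem5:
  fixes C :: "'a set" and r :: "'a \<Rightarrow> 'a \<Rightarrow> bool"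
  assumes "abstract_basis C r"
    and "interpolative_plus C r"
  shows "abstract_basis (int_set C r) (int_rel r)"
proof -
  have "transp_on (int_set C r) (int_rel r)"
    using transp_on_int_rel[OF abstract_basis_transp_on[OF assms(1)]] .
  then show ?thesis
    using int_rel_interpolate[OF assms]
    unfolding abstract_basis_def transp_on_def by blast
qed

end
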